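(* Let $K \geq 1$ be an integer. Let $X$ be uniformly distributed on $[0,1)$, and let $K-1$ thresholds be drawn independently of each other and of $X$, each uniformly distributed on $[0,1)$; denote them in ascending order by $a_1 \leq a_2 \leq \cdots \leq a_{K-1}$, and set $a_0 = 0$, $a_K = 1$. Define the lossy encoder $\alpha:[0,1) \to \{1,2,\ldots,K\}$ by $\alpha(x) = k$ for $x \in [a_{k-1}, a_k)$, and the decoder $\beta:\{1,\ldots,K\} \to [0,1)$ by $\beta(k) = \tfrac{1}{2}(a_{k-1}+a_k)$. Then the mean-squared error, averaged over both $X$ and the random thresholds, is $$D = \mathbb{E}\big[(X - \beta(\alpha(X)))^2\big] = \frac{1}{2(K+1)(K+2)}.$$ *)

theory Defs
  imports "HOL-Probability.Probability"
begin

definition unif01 :: "real measure" where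
  "unif01 = uniform_measure lborel {0..<1}"

definition thr :: "nat \<Rightarrow> (nat \<Rightarrow> real) \<Rightarrow> nat \<Rightarrow> real" where
  "thr K t k = (if k = 0 then 0 else if k \<ge> K then 1
                else sort (map t [0..<K-1]) ! (k - 1))"

definition encoder :: "nat \<Rightarrow> (nat \<Rightarrow> real) \<Rightarrow> real \<Rightarrow> nat" where
  "encoder K t x = (THE k. k \<in> {1..K} \<and> thr K t (k - 1) \<le> x \<and> x < thr K t k)"

definition decoder :: "nat \<Rightarrow> (nat \<Rightarrow> real) \<Rightarrow> nat \<Rightarrow> real" where
  "decoder K t k = (thr K t (k - 1) + thr K t k) / 2"

end

theory Submission
  imports Defs
begin

text \<open>
  Write \<open>n = K - 1\<close>. For a point \<open>x\<close> and thresholds \<open>t\<close>, let \<open>L\<close> and \<open>R\<close> be the nearest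
  threshold (or endpoint \<open>0\<close>, \<open>1\<close>) below and above \<open>x\<close>. The decoder returns \<open>(L + R) / 2\<close>,
  so the squared error is \<open>((x - L) - (R - x))\<^sup>2 / 4\<close>, and everything reduces to the moments
  \<open>M\<^sub>n(a, b) = E[(x - L)\<^sup>a (R - x)\<^sup>b]\<close>. Integrating out the last threshold \<open>s\<close>, which
  either misses the cell \<open>[L, R)\<close> or splits it, gives
  \<open>M\<^sub>n\<^sub>+\<^sub>1(a, b) = M\<^sub>n(a, b) - a/(a+1) M\<^sub>n(a+1, b) - b/(b+1) M\<^sub>n(a, b+1)\<close>; together with
  the Beta integral \<open>M\<^sub>0(a, b) = a! b! / (a+b+1)!\<close> this solves to
  \<open>M\<^sub>n(a, b) = a! b! (n+1)! / (a+b+n+1)!\<close>, and the error is \<open>(M(2,0) - 2 M(1,1) + M(0,2)) / 4\<close>.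
\<close>

section \<open>Uniform measures\<close>

lemma sets_unif01 [measurable_cong]: "sets unif01 = sets borel"
  unfolding unif01_def by simp

lemma space_unif01 [simp]: "space unif01 = UNIV"
  unfolding unif01_def by simp

lemma prob_space_unif01: "prob_space unif01"
  unfolding unif01_def by (rule prob_space_uniform_measure) auto

interpretation unif01: prob_space unif01
  by (rule prob_space_unif01)

lemma AE_unif01: "AE x in unif01. 0 \<le> x \<and> x < 1"
  unfolding unif01_def by (rule AE_uniform_measureI) auto

lemma integral_unif01_eq_has_integral:
  fixes f :: "real \<Rightarrow> real"
  assumes f: "(f has_integral I) {0..1}"
    and [measurable]: "f \<in> borel_measurable borel"
    and bound: "\<And>x. 0 \<le> x \<Longrightarrow> x \<le> 1 \<Longrightarrow> \<bar>f x\<bar> \<le> B"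
  shows "(\<integral>x. f x \<partial>unif01) = I"
proof -
  have density: "unif01 = density lborel (\<lambda>x. ennreal (indicator {0..<1} x))"
    unfolding unif01_def uniform_measure_def by (simp add: ennreal_indicator divide_ennreal_def)
  have "integrable unif01 f"
    by (rule unif01.integrable_const_bound[where B = B])
       (use AE_unif01 bound in \<open>auto simp: measurable_cong_sets[OF sets_unif01 refl]\<close>)
  then have "set_integrable lborel {0..<1} f"
    unfolding density set_integrable_def by (subst (asm) integrable_density) auto
  moreover have "(f has_integral I) {0..<1}"
    using f by (subst has_integral_spike_set_eq[where T = "{0..1}"])
      (auto intro: negligible_subset[OF negligible_sing[of 1]])
  ultimately have "(LINT x : {0..<1} | lborel. f x) = I"
    using set_borel_integral_eq_integral(2) integral_unique by metis
  then show ?thesis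
    unfolding density set_lebesgue_integral_def by (subst integral_density) auto
qed

abbreviation unif01_prod :: "nat \<Rightarrow> (nat \<Rightarrow> real) measure" where
  "unif01_prod n \<equiv> \<Pi>\<^sub>M i\<in>{..<n}. unif01"

interpretation unif01_prod: product_sigma_finite "\<lambda>_::nat. unif01"
  by unfold_locales

lemma prob_space_unif01_prod: "prob_space (unif01_prod n)"
  by (intro prob_space_PiM prob_space_unif01)

lemma pair_prob_space_unif01_prod: "pair_prob_space unif01 (unif01_prod n)"
  by (simp add: pair_prob_space_def pair_sigma_finite_def prob_space_unif01
      prob_space_unif01_prod prob_space_imp_sigma_finite)

lemma measurable_unif01_prod_component [measurable]:
  "i < n \<Longrightarrow> (\<lambda>t. t i) \<in> borel_measurable (unif01_prod n)"
  using measurable_component_singleton[of i "{..<n}" "\<lambda>_. unif01"]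
  by (simp add: measurable_cong_sets[OF refl sets_unif01[symmetric]])

section \<open>Order statistics of the thresholds\<close>

lemma nth_insort:
  fixes y :: "'a::linorder"
  assumes "sorted xs" "j \<le> length xs"
  shows "insort y xs ! j =
    (if j = 0 then (if xs = [] then y else min (xs ! 0) y)
     else if j = length xs then max (xs ! (j - 1)) y
     else min (xs ! j) (max (xs ! (j - 1)) y))"
  using assms
proof (induction xs arbitrary: j)
  case Nil
  then show ?case by simp
next
  case (Cons x xs)
  show ?case
  proof (cases j)
    case 0
    then show ?thesis by auto
  next
    case (Suc i)
    show ?thesis
    proof (cases "y \<le> x")
      case True
      have "x \<le> (x # xs) ! i"
        using sorted_nth_mono[OF Cons.prems(1), of 0 i] Cons.prems Suc by simp
      moreover have "i < length xs \<Longrightarrow> (x # xs) ! i \<le> (x # xs) ! Suc i"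
        using sorted_nth_mono[OF Cons.prems(1), of i "Suc i"] by simp
      ultimately show ?thesis
        using True Suc Cons.prems(2) by (auto simp: min_def max_def)
    next
      case False
      have "insort y xs ! i =
        (if i = 0 then (if xs = [] then y else min (xs ! 0) y)
         else if i = length xs then max (xs ! (i - 1)) y
         else min (xs ! i) (max (xs ! (i - 1)) y))"
        using Cons Suc by auto
      then show ?thesis
        using False Suc by (cases i) (auto simp: max_def min_def nth_Cons')
    qed
  qed
qed

definition order_stats :: "nat \<Rightarrow> (nat \<Rightarrow> real) \<Rightarrow> real list" where
  "order_stats n t = sort (map t [0..<n])"

lemma order_stats_Suc: "order_stats (Suc n) t = insort (t n) (order_stats n t)"
  unfolding order_stats_def by (rule properties_for_sort) (auto simp: sorted_insort)

lemma length_order_stats [simp]: "length (order_stats n t) = n"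
  by (simp add: order_stats_def)

lemma sorted_order_stats: "sorted (order_stats n t)"
  by (simp add: order_stats_def)

lemma set_order_stats: "set (order_stats n t) = t ` {..<n}"
  by (auto simp: order_stats_def)

lemma measurable_order_stats:
  "n \<le> N \<Longrightarrow> j < n \<Longrightarrow> (\<lambda>t. order_stats n t ! j) \<in> borel_measurable (unif01_prod N)"
proof (induction n arbitrary: j)
  case 0
  then show ?case by simp
next
  case (Suc n)
  have IH: "(\<lambda>t. order_stats n t ! i) \<in> borel_measurable (unif01_prod N)" if "i < n" for i
    using Suc.IH[of i] Suc.prems that by simp
  have "(\<lambda>t. t n) \<in> borel_measurable (unif01_prod N)"
    using Suc.prems by simp
  moreover have "(\<lambda>t. order_stats (Suc n) t ! j) =
    (\<lambda>t. if j = 0 then (if n = 0 then t n else min (order_stats n t ! 0) (t n))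
         else if j = n then max (order_stats n t ! (j - 1)) (t n)
         else min (order_stats n t ! j) (max (order_stats n t ! (j - 1)) (t n)))"
    using Suc.prems
    by (auto simp: order_stats_Suc nth_insort sorted_order_stats simp flip: length_0_conv)
  ultimately show ?case
    using Suc.prems
    by (cases "j = 0"; cases "j = n"; cases "n = 0")
       (auto intro!: borel_measurable_min borel_measurable_max IH)
qed

lemma thr_eq_order_stats:
  "thr K t k = (if k = 0 then 0 else if K \<le> k then 1 else order_stats (K - 1) t ! (k - 1))"
  unfolding thr_def order_stats_def by simp

lemma measurable_thr [measurable]: "(\<lambda>t. thr K t k) \<in> borel_measurable (unif01_prod (K - 1))"
proof (cases "k = 0 \<or> K \<le> k")
  case False
  then show ?thesis
    using measurable_order_stats[of "K - 1" "K - 1" "k - 1"] by (auto simp: thr_eq_order_stats)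
qed (cases "k = 0"; simp add: thr_eq_order_stats)

lemma thr_image: "thr K t ` {1..<K} = t ` {..<K - 1}"
proof -
  have "{1..<K} = Suc ` {..<K - 1}"
    by (cases K) (simp_all add: image_Suc_lessThan atLeastLessThanSuc_atLeastAtMost)
  moreover have "thr K t (Suc i) = order_stats (K - 1) t ! i" if "i < K - 1" for i
    using that by (simp add: thr_eq_order_stats)
  ultimately have "thr K t ` {1..<K} = (\<lambda>i. order_stats (K - 1) t ! i) ` {..<K - 1}"
    by (simp add: image_image)
  also have "\<dots> = set (order_stats (K - 1) t)"
    by (auto simp: set_conv_nth)
  finally show ?thesis
    by (simp add: set_order_stats)
qed

section \<open>Encoder cells and nearest thresholds\<close>

lemma thr_mono_inner: "1 \<le> i \<Longrightarrow> i \<le> j \<Longrightarrow> j < K \<Longrightarrow> thr K t i \<le> thr K t j"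
  unfolding thr_eq_order_stats
  using sorted_nth_mono[OF sorted_order_stats, of "i - 1" "j - 1" "K - 1" t] by auto

lemma thr_bounds:
  assumes "\<And>i. i < K - 1 \<Longrightarrow> t i \<in> {0..1}"
  shows "thr K t k \<in> {0..1}"
proof (cases "k \<in> {1..<K}")
  case True
  then have "thr K t k \<in> t ` {..<K - 1}"
    using thr_image by blast
  then show ?thesis
    using assms by auto
qed (auto simp: thr_eq_order_stats)

lemma mono_thr:
  assumes "\<And>i. i < K - 1 \<Longrightarrow> t i \<in> {0..1}"
  shows "mono (thr K t)"
proof (rule monoI)
  fix i j :: nat
  assume "i \<le> j"
  have "thr K t 0 = 0" "K \<le> j \<Longrightarrow> j \<noteq> 0 \<Longrightarrow> thr K t j = 1"
    by (simp_all add: thr_def)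
  then show "thr K t i \<le> thr K t j"
    using \<open>i \<le> j\<close> thr_mono_inner[of i j K t] thr_bounds[of K t, OF assms]
    by (cases "i = 0"; cases "K \<le> j") force+
qed

lemma encoder_eqI:
  assumes k: "k \<in> {1..K}" "thr K t (k - 1) \<le> x" "x < thr K t k"
  shows "encoder K t x = k"
proof -
  have no_lower_cell: "\<not> k < k'"
    if "k \<in> {1..K}" "x < thr K t k" "k' \<in> {1..K}" "thr K t (k' - 1) \<le> x" for k k'
  proof
    assume "k < k'"
    then have "thr K t k \<le> thr K t (k' - 1)"
      using that by (intro thr_mono_inner) auto
    then show False
      using that by simp
  qed
  then have unique: "k' = k" if "k' \<in> {1..K}" "thr K t (k' - 1) \<le> x" "x < thr K t k'" for k'
    using no_lower_cell[of k k'] no_lower_cell[of k' k] k that by linarith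
  show ?thesis
    unfolding encoder_def
  proof (rule the_equality)
    show "k \<in> {1..K} \<and> thr K t (k - 1) \<le> x \<and> x < thr K t k"
      using k by simp
  qed (use unique in simp)
qed

lemma measurable_encoder:
  "(\<lambda>p. encoder K (snd p) (fst p))
    \<in> measurable (unif01 \<Otimes>\<^sub>M unif01_prod (K - 1)) (count_space UNIV)"
  unfolding encoder_def
proof (rule measurable_THE[where I = "{1..K}"])
  fix k
  show "Measurable.pred (unif01 \<Otimes>\<^sub>M unif01_prod (K - 1))
    (\<lambda>p. k \<in> {1..K} \<and> thr K (snd p) (k - 1) \<le> fst p \<and> fst p < thr K (snd p) k)"
    by measurable
next
  fix p k k'
  assume "k \<in> {1..K} \<and> thr K (snd p) (k - 1) \<le> fst p \<and> fst p < thr K (snd p) k"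
    and "k' \<in> {1..K} \<and> thr K (snd p) (k' - 1) \<le> fst p \<and> fst p < thr K (snd p) k'"
  then show "k = k'"
    using encoder_eqI[of k K "snd p" "fst p"] encoder_eqI[of k' K "snd p" "fst p"] by simp
qed auto

lemma measurable_quantization_error:
  "(\<lambda>p. (fst p - decoder K (snd p) (encoder K (snd p) (fst p)))\<^sup>2)
    \<in> borel_measurable (unif01 \<Otimes>\<^sub>M unif01_prod (K - 1))"
proof -
  have "(\<lambda>p. (\<lambda>k p. (fst p - decoder K (snd p) k)\<^sup>2) (encoder K (snd p) (fst p)) p)
      \<in> borel_measurable (unif01 \<Otimes>\<^sub>M unif01_prod (K - 1))"
    by (rule measurable_compose_countable[OF _ measurable_encoder]) (unfold decoder_def, measurable)
  then show ?thesis by simp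
qed

text \<open>These are \<open>L\<close> and \<open>R\<close>; a threshold equal to \<open>x\<close> counts as below \<open>x\<close>, as in
  the half-open cells of the encoder.\<close>

primrec nearest_below :: "nat \<Rightarrow> real \<Rightarrow> (nat \<Rightarrow> real) \<Rightarrow> real" where
  "nearest_below 0 x t = 0"
| "nearest_below (Suc n) x t =
    (if t n \<le> x then max (nearest_below n x t) (t n) else nearest_below n x t)"

primrec nearest_above :: "nat \<Rightarrow> real \<Rightarrow> (nat \<Rightarrow> real) \<Rightarrow> real" where
  "nearest_above 0 x t = 1"
| "nearest_above (Suc n) x t =
    (if x < t n then min (nearest_above n x t) (t n) else nearest_above n x t)"

lemma nearest_below_cases:
  "nearest_below n x t = 0 \<or> (\<exists>i<n. t i \<le> x \<and> nearest_below n x t = t i)"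
  by (induction n) (auto simp: max_def less_Suc_eq)

lemma nearest_above_cases:
  "nearest_above n x t = 1 \<or> (\<exists>i<n. x < t i \<and> nearest_above n x t = t i)"
  by (induction n) (auto simp: min_def less_Suc_eq)

lemma nearest_below_nonneg: "0 \<le> nearest_below n x t"
  by (induction n) auto

lemma nearest_above_le_1: "nearest_above n x t \<le> 1"
  by (induction n) auto

lemma nearest_below_ge: "i < n \<Longrightarrow> t i \<le> x \<Longrightarrow> t i \<le> nearest_below n x t"
  by (induction n) (auto simp: less_Suc_eq)

lemma nearest_above_le: "i < n \<Longrightarrow> x < t i \<Longrightarrow> nearest_above n x t \<le> t i"
  by (induction n) (auto simp: less_Suc_eq)

lemma nearest_below_le: "0 \<le> x \<Longrightarrow> nearest_below n x t \<le> x"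
  using nearest_below_cases[of n x t] by auto

lemma nearest_above_gt: "x < 1 \<Longrightarrow> x < nearest_above n x t"
  using nearest_above_cases[of n x t] by auto

lemma nearest_below_fun_upd: "m \<le> n \<Longrightarrow> nearest_below m x (t(n := s)) = nearest_below m x t"
  by (induction m) auto

lemma nearest_above_fun_upd: "m \<le> n \<Longrightarrow> nearest_above m x (t(n := s)) = nearest_above m x t"
  by (induction m) auto

lemma nearest_below_eq:
  fixes a :: "nat \<Rightarrow> real"
  assumes a: "mono a" "a 0 = 0" "a ` {1..<K} = t ` {..<n}"
    and k: "k \<in> {1..K}" "a (k - 1) \<le> x" "x < a k"
  shows "nearest_below n x t = a (k - 1)"
proof (rule antisym)
  show "nearest_below n x t \<le> a (k - 1)"
    using nearest_below_cases[of n x t]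
  proof
    assume "nearest_below n x t = 0"
    then show ?thesis
      using a monoD[of a 0 "k - 1"] by simp
  next
    assume "\<exists>i<n. t i \<le> x \<and> nearest_below n x t = t i"
    then obtain i where i: "i < n" "t i \<le> x" "nearest_below n x t = t i"
      by blast
    then have "t i \<in> a ` {1..<K}"
      using a(3) by simp
    then obtain j where "a j \<le> x" "nearest_below n x t = a j"
      using i by force
    moreover have "j \<le> k - 1"
      using \<open>a j \<le> x\<close> k monoD[OF a(1), of k j] by (cases "k \<le> j") auto
    ultimately show ?thesis
      using monoD[OF a(1)] by simp
  qed
next
  show "a (k - 1) \<le> nearest_below n x t"
  proof (cases "k = 1")
    case True
    then show ?thesis
      using a(2) nearest_below_nonneg by simp
  next
    case False
    then have "k - 1 \<in> {1..<K}"
      using k by auto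
    then have "a (k - 1) \<in> t ` {..<n}"
      using a(3) by blast
    then show ?thesis
      using nearest_below_ge k by auto
  qed
qed

lemma nearest_above_eq:
  fixes a :: "nat \<Rightarrow> real"
  assumes a: "mono a" "a K = 1" "a ` {1..<K} = t ` {..<n}"
    and k: "k \<in> {1..K}" "a (k - 1) \<le> x" "x < a k"
  shows "nearest_above n x t = a k"
proof (rule antisym)
  show "a k \<le> nearest_above n x t"
    using nearest_above_cases[of n x t]
  proof
    assume "nearest_above n x t = 1"
    then show ?thesis
      using a k monoD[of a k K] by simp
  next
    assume "\<exists>i<n. x < t i \<and> nearest_above n x t = t i"
    then obtain i where i: "i < n" "x < t i" "nearest_above n x t = t i"
      by blast
    then have "t i \<in> a ` {1..<K}"
      using a(3) by simp
    then obtain j where "x < a j" "nearest_above n x t = a j"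
      using i by force
    moreover have "k \<le> j"
      using \<open>x < a j\<close> k monoD[OF a(1), of j "k - 1"] by (cases "j \<le> k - 1") auto
    ultimately show ?thesis
      using monoD[OF a(1)] by simp
  qed
next
  show "nearest_above n x t \<le> a k"
  proof (cases "k = K")
    case True
    then show ?thesis
      using a(2) nearest_above_le_1 by simp
  next
    case False
    then have "a k \<in> t ` {..<n}"
      using a(3) k by auto
    then show ?thesis
      using nearest_above_le k by auto
  qed
qed

lemma decoder_encoder:
  assumes "1 \<le> K" "0 \<le> x" "x < 1" "\<And>i. i < K - 1 \<Longrightarrow> t i \<in> {0..1}"
  shows "decoder K t (encoder K t x) = (nearest_below (K - 1) x t + nearest_above (K - 1) x t) / 2"
proof -
  have thr0: "thr K t 0 = 0" and thrK: "thr K t K = 1"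
    using assms(1) by (simp_all add: thr_eq_order_stats)
  define k where "k = (LEAST k. x < thr K t k)"
  have "x < thr K t k" "k \<le> K"
    unfolding k_def using assms(3) thrK by (auto intro: LeastI[of _ K] Least_le[of _ K])
  moreover have "k \<noteq> 0"
    using \<open>x < thr K t k\<close> thr0 assms(2) by (cases "k = 0") auto
  moreover have "thr K t (k - 1) \<le> x"
    using not_less_Least[of "k - 1" "\<lambda>k. x < thr K t k"] \<open>k \<noteq> 0\<close> unfolding k_def by fastforce
  ultimately have cell: "k \<in> {1..K}" "thr K t (k - 1) \<le> x" "x < thr K t k"
    by auto
  note thr = mono_thr[OF assms(4)] thr0 thrK thr_image
  show ?thesis
    unfolding encoder_eqI[OF cell] decoder_def
    using nearest_below_eq[OF thr(1,2,4) cell] nearest_above_eq[OF thr(1,3,4) cell] by simp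
qed

section \<open>Inserting one threshold\<close>

lemma has_integral_power_sub_left:
  fixes c p q :: real
  assumes "p \<le> q"
  shows "((\<lambda>s. (s - c) ^ a) has_integral ((q - c) ^ Suc a - (p - c) ^ Suc a) / Suc a) {p..q}"
proof -
  have "((\<lambda>s. (s - c) ^ Suc a / Suc a) has_real_derivative (s - c) ^ a) (at s within {p..q})" for s
    by (auto intro!: derivative_eq_intros simp del: of_nat_Suc power_Suc)
  then show ?thesis
    using fundamental_theorem_of_calculus[OF assms, of "\<lambda>s. (s - c) ^ Suc a / Suc a"]
    by (simp add: has_real_derivative_iff_has_vector_derivative diff_divide_distrib)
qed

lemma has_integral_power_sub_right:
  fixes c p q :: real
  assumes "p \<le> q"
  shows "((\<lambda>s. (c - s) ^ a) has_integral ((c - p) ^ Suc a - (c - q) ^ Suc a) / Suc a) {p..q}"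
proof -
  have "((\<lambda>s. - ((c - s) ^ Suc a / Suc a)) has_real_derivative (c - s) ^ a) (at s within {p..q})"
    for s
    by (auto intro!: derivative_eq_intros simp del: of_nat_Suc power_Suc)
  then show ?thesis
    using fundamental_theorem_of_calculus[OF assms, of "\<lambda>s. - ((c - s) ^ Suc a / Suc a)"]
    by (simp add: has_real_derivative_iff_has_vector_derivative diff_divide_distrib)
qed

lemma has_integral_beta_nat:
  "((\<lambda>s::real. s ^ a * (1 - s) ^ b) has_integral fact a * fact b / fact (a + b + 1)) {0..1}"
proof -
  have "((\<lambda>s. s powr (real (Suc a) - 1) * (1 - s) powr (real (Suc b) - 1))
      has_integral Beta (real (Suc a)) (real (Suc b))) {0..1}"
    by (rule has_integral_Beta_real) auto
  moreover have "Beta (real (Suc a)) (real (Suc b)) = fact a * fact b / fact (a + b + 1)"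
    using Gamma_fact[of a, where 'a = real] Gamma_fact[of b, where 'a = real]
      Gamma_fact[of "a + b + 1", where 'a = real]
    by (simp add: Beta_def add_ac)
  ultimately have beta: "((\<lambda>s. s powr (real (Suc a) - 1) * (1 - s) powr (real (Suc b) - 1))
      has_integral fact a * fact b / fact (a + b + 1)) {0..1}"
    by simp
  show ?thesis
    by (rule has_integral_spike_finite[OF _ _ beta, where S = "{0, 1}"]) (auto simp: powr_realpow)
qed

text \<open>The integrand is the gap monomial of \<open>x\<close> after a new threshold \<open>s\<close> is added to
  its cell \<open>[L, R)\<close>.\<close>

lemma integral_unif01_insert_threshold:
  fixes L x R :: real
  assumes "0 \<le> L" "L \<le> x" "x < R" "R \<le> 1"
  shows "(\<integral>s. (x - (if s \<le> x then max L s else L)) ^ a * ((if x < s then min R s else R) - x) ^ b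
      \<partial>unif01) = (x - L) ^ a * (R - x) ^ b - real a / (real a + 1) * ((x - L) ^ Suc a * (R - x) ^ b)
      - real b / (real b + 1) * ((x - L) ^ a * (R - x) ^ Suc b)"
proof -
  define f where
    "f s = (x - (if s \<le> x then max L s else L)) ^ a * ((if x < s then min R s else R) - x) ^ b" for s
  define u v where "u = x - L" and "v = R - x"
  have below: "(f has_integral L * (u ^ a * v ^ b)) {0..L}"
  proof (rule has_integral_spike_finite[where S = "{}", rotated 2])
    show "((\<lambda>s. u ^ a * v ^ b) has_integral L * (u ^ a * v ^ b)) {0..L}"
      using has_integral_const_real[of "u ^ a * v ^ b" 0 L] assms(1) by (simp add: content_real)
  qed (use assms in \<open>auto simp: f_def u_def v_def\<close>)
  have left: "(f has_integral u ^ Suc a / Suc a * v ^ b) {L..x}"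
  proof (rule has_integral_spike_finite[where S = "{}", rotated 2])
    show "((\<lambda>s. (x - s) ^ a * v ^ b) has_integral u ^ Suc a / Suc a * v ^ b) {L..x}"
      using has_integral_mult_left[OF has_integral_power_sub_right[of L x x a]] assms
      by (simp add: u_def)
  qed (use assms in \<open>auto simp: f_def u_def v_def\<close>)
  have right: "(f has_integral u ^ a * (v ^ Suc b / Suc b)) {x..R}"
  proof (rule has_integral_spike_finite[where S = "{x}", rotated 2])
    show "((\<lambda>s. u ^ a * (s - x) ^ b) has_integral u ^ a * (v ^ Suc b / Suc b)) {x..R}"
      using has_integral_mult_right[OF has_integral_power_sub_left[of x R x b]] assms
      by (simp add: v_def)
  qed (use assms in \<open>auto simp: f_def u_def v_def\<close>)
  have above: "(f has_integral (1 - R) * (u ^ a * v ^ b)) {R..1}"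
  proof (rule has_integral_spike_finite[where S = "{}", rotated 2])
    show "((\<lambda>s. u ^ a * v ^ b) has_integral (1 - R) * (u ^ a * v ^ b)) {R..1}"
      using has_integral_const_real[of "u ^ a * v ^ b" R 1] assms(4) by (simp add: content_real)
  qed (use assms in \<open>auto simp: f_def u_def v_def\<close>)
  have "(f has_integral L * (u ^ a * v ^ b) + u ^ Suc a / Suc a * v ^ b
      + u ^ a * (v ^ Suc b / Suc b) + (1 - R) * (u ^ a * v ^ b)) {0..1}"
    using assms
    by (intro has_integral_combine[OF _ _ _ above] has_integral_combine[OF _ _ _ right]
        has_integral_combine[OF _ _ below left]) auto
  then have "(\<integral>s. f s \<partial>unif01) = L * (u ^ a * v ^ b) + u ^ Suc a / Suc a * v ^ b
      + u ^ a * (v ^ Suc b / Suc b) + (1 - R) * (u ^ a * v ^ b)"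
  proof (rule integral_unif01_eq_has_integral[where B = 1])
    show "f \<in> borel_measurable borel"
      unfolding f_def by measurable
    show "\<bar>f s\<bar> \<le> 1" if "0 \<le> s" "s \<le> 1" for s
      unfolding f_def using assms that
      by (auto simp: abs_mult power_le_one mult_le_one)
  qed
  also have "\<dots> = (1 - u - v) * (u ^ a * v ^ b) + u ^ Suc a / Suc a * v ^ b
      + u ^ a * (v ^ Suc b / Suc b)"
    unfolding u_def v_def by (simp add: algebra_simps)
  also have "\<dots> = u ^ a * v ^ b - real a / (real a + 1) * (u ^ Suc a * v ^ b)
      - real b / (real b + 1) * (u ^ a * v ^ Suc b)"
    by (simp add: field_simps)
  finally show ?thesis
    unfolding f_def u_def v_def .
qed

section \<open>Moments of the gaps\<close>

definition gap_monomial :: "nat \<Rightarrow> nat \<Rightarrow> nat \<Rightarrow> real \<times> (nat \<Rightarrow> real) \<Rightarrow> real" where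
  "gap_monomial n a b p =
    (fst p - nearest_below n (fst p) (snd p)) ^ a * (nearest_above n (fst p) (snd p) - fst p) ^ b"

definition gap_moment :: "nat \<Rightarrow> nat \<Rightarrow> nat \<Rightarrow> real" where
  "gap_moment n a b = (\<integral>p. gap_monomial n a b p \<partial>(unif01 \<Otimes>\<^sub>M unif01_prod n))"

lemma measurable_snd_component:
  "i < N \<Longrightarrow> (\<lambda>p. snd p i) \<in> borel_measurable (unif01 \<Otimes>\<^sub>M unif01_prod N)"
  by (rule measurable_compose[OF measurable_snd measurable_unif01_prod_component])

lemma measurable_nearest_below:
  "n \<le> N \<Longrightarrow>
    (\<lambda>p. nearest_below n (fst p) (snd p)) \<in> borel_measurable (unif01 \<Otimes>\<^sub>M unif01_prod N)"
proof (induction n)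
  case (Suc n)
  note [measurable] = measurable_snd_component[of n N]
  have [measurable]:
    "(\<lambda>p. nearest_below n (fst p) (snd p)) \<in> borel_measurable (unif01 \<Otimes>\<^sub>M unif01_prod N)"
    using Suc by simp
  show ?case
    using Suc.prems by simp measurable
qed simp

lemma measurable_nearest_above:
  "n \<le> N \<Longrightarrow>
    (\<lambda>p. nearest_above n (fst p) (snd p)) \<in> borel_measurable (unif01 \<Otimes>\<^sub>M unif01_prod N)"
proof (induction n)
  case (Suc n)
  note [measurable] = measurable_snd_component[of n N]
  have [measurable]:
    "(\<lambda>p. nearest_above n (fst p) (snd p)) \<in> borel_measurable (unif01 \<Otimes>\<^sub>M unif01_prod N)"
    using Suc by simp
  show ?case
    using Suc.prems by simp measurable
qed simp

lemma measurable_gap_monomial [measurable]: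
  "gap_monomial n a b \<in> borel_measurable (unif01 \<Otimes>\<^sub>M unif01_prod n)"
  using measurable_nearest_below[of n n] measurable_nearest_above[of n n]
  unfolding gap_monomial_def by measurable

lemma abs_gap_monomial_le_1: "0 \<le> x \<Longrightarrow> x < 1 \<Longrightarrow> \<bar>gap_monomial n a b (x, t)\<bar> \<le> 1"
  using nearest_below_nonneg[of n x t] nearest_below_le[of x n t]
    nearest_above_le_1[of n x t] nearest_above_gt[of x n t]
  by (simp add: gap_monomial_def abs_mult power_le_one mult_le_one)

lemma AE_unif01_pair_fst: "AE p in unif01 \<Otimes>\<^sub>M unif01_prod N. 0 \<le> fst p \<and> fst p < 1"
proof -
  interpret pair_prob_space unif01 "unif01_prod N"
    by (rule pair_prob_space_unif01_prod)
  show ?thesis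
    by (rule AE_pair_measure) (use AE_unif01 in \<open>measurable, auto\<close>)
qed

lemma AE_unif01_pair_thresholds:
  "AE p in unif01 \<Otimes>\<^sub>M unif01_prod n. \<forall>i\<in>{..<n}. snd p i \<in> {0..<1}"
proof (rule AE_finite_allI)
  interpret pair_prob_space unif01 "unif01_prod n"
    by (rule pair_prob_space_unif01_prod)
  fix i
  assume i: "i \<in> {..<n}"
  note [measurable] = measurable_snd_component[of i n]
  show "AE p in unif01 \<Otimes>\<^sub>M unif01_prod n. snd p i \<in> {0..<1}"
  proof (rule AE_pair_measure)
    show "AE x in unif01. AE t in unif01_prod n. snd (x, t) i \<in> {0..<1}"
      using AE_PiM_component[of "{..<n}" "\<lambda>_. unif01" i "\<lambda>y. y \<in> {0..<1}"]
        prob_space_unif01 AE_unif01 i by auto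
  qed (use i in measurable)
qed simp

lemma integrable_gap_monomial: "integrable (unif01 \<Otimes>\<^sub>M unif01_prod n) (gap_monomial n a b)"
proof -
  interpret pair_prob_space unif01 "unif01_prod n"
    by (rule pair_prob_space_unif01_prod)
  show ?thesis
  proof (rule integrable_const_bound[where B = 1])
    show "AE p in unif01 \<Otimes>\<^sub>M unif01_prod n. norm (gap_monomial n a b p) \<le> 1"
      using AE_unif01_pair_fst[of n]
      by eventually_elim (metis abs_gap_monomial_le_1 prod.collapse real_norm_def)
  qed simp
qed

lemma integral_gap_monomial_Suc:
  assumes x: "0 \<le> x" "x < 1"
  shows "(\<integral>t. gap_monomial (Suc n) a b (x, t) \<partial>unif01_prod (Suc n)) =
    (\<integral>t. gap_monomial n a b (x, t) - real a / (real a + 1) * gap_monomial n (Suc a) b (x, t)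
        - real b / (real b + 1) * gap_monomial n a (Suc b) (x, t) \<partial>unif01_prod n)"
proof -
  interpret prob_space "unif01_prod (Suc n)"
    by (rule prob_space_unif01_prod)
  have "integrable (unif01_prod (Suc n)) (\<lambda>t. gap_monomial (Suc n) a b (x, t))"
    by (rule integrable_const_bound[where B = 1])
       (use abs_gap_monomial_le_1[OF x] measurable_Pair1'[of x unif01] in auto)
  then have "(\<integral>t. gap_monomial (Suc n) a b (x, t) \<partial>unif01_prod (Suc n)) =
      (\<integral>t. \<integral>s. gap_monomial (Suc n) a b (x, t(n := s)) \<partial>unif01 \<partial>unif01_prod n)"
    using unif01_prod.product_integral_insert[of "{..<n}" n] by (simp add: lessThan_Suc)
  also have "\<dots> = (\<integral>t. gap_monomial n a b (x, t) - real a / (real a + 1) * gap_monomial n (Suc a) b (x, t)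
        - real b / (real b + 1) * gap_monomial n a (Suc b) (x, t) \<partial>unif01_prod n)"
  proof (rule Bochner_Integration.integral_cong[OF refl])
    fix t
    show "(\<integral>s. gap_monomial (Suc n) a b (x, t(n := s)) \<partial>unif01) =
      gap_monomial n a b (x, t) - real a / (real a + 1) * gap_monomial n (Suc a) b (x, t)
        - real b / (real b + 1) * gap_monomial n a (Suc b) (x, t)"
    proof -
      have "(\<lambda>s. gap_monomial (Suc n) a b (x, t(n := s))) = (\<lambda>s.
          (x - (if s \<le> x then max (nearest_below n x t) s else nearest_below n x t)) ^ a *
          ((if x < s then min (nearest_above n x t) s else nearest_above n x t) - x) ^ b)"
        by (simp add: fun_eq_iff gap_monomial_def nearest_below_fun_upd nearest_above_fun_upd)
      then show ?thesis
        using integral_unif01_insert_threshold[of "nearest_below n x t" x "nearest_above n x t" a b]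
          nearest_below_nonneg[of n x t] nearest_below_le[of x n t]
          nearest_above_le_1[of n x t] nearest_above_gt[of x n t] x
        by (simp add: gap_monomial_def)
    qed
  qed
  finally show ?thesis .
qed

lemma gap_moment_Suc:
  "gap_moment (Suc n) a b = gap_moment n a b - real a / (real a + 1) * gap_moment n (Suc a) b
    - real b / (real b + 1) * gap_moment n a (Suc b)"
proof -
  interpret Suc: pair_prob_space unif01 "unif01_prod (Suc n)"
    by (rule pair_prob_space_unif01_prod)
  interpret pair_prob_space unif01 "unif01_prod n"
    by (rule pair_prob_space_unif01_prod)
  let ?g = "\<lambda>p. gap_monomial n a b p - real a / (real a + 1) * gap_monomial n (Suc a) b p
    - real b / (real b + 1) * gap_monomial n a (Suc b) p"
  have int: "integrable (unif01 \<Otimes>\<^sub>M unif01_prod n) ?g"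
    using integrable_gap_monomial by simp
  have "gap_moment (Suc n) a b =
      (\<integral>x. \<integral>t. gap_monomial (Suc n) a b (x, t) \<partial>unif01_prod (Suc n) \<partial>unif01)"
    unfolding gap_moment_def by (rule Suc.integral_fst'[symmetric]) (rule integrable_gap_monomial)
  also have "\<dots> = (\<integral>x. \<integral>t. ?g (x, t) \<partial>unif01_prod n \<partial>unif01)"
  proof (rule integral_cong_AE)
    show "(\<lambda>x. \<integral>t. gap_monomial (Suc n) a b (x, t) \<partial>unif01_prod (Suc n)) \<in> borel_measurable unif01"
      by (rule Suc.M2.borel_measurable_lebesgue_integral) simp
    show "(\<lambda>x. \<integral>t. ?g (x, t) \<partial>unif01_prod n) \<in> borel_measurable unif01"
      by (rule M2.borel_measurable_lebesgue_integral) simp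
    show "AE x in unif01. (\<integral>t. gap_monomial (Suc n) a b (x, t) \<partial>unif01_prod (Suc n)) =
        (\<integral>t. ?g (x, t) \<partial>unif01_prod n)"
      using AE_unif01 by eventually_elim (simp add: integral_gap_monomial_Suc)
  qed
  also have "\<dots> = (\<integral>p. ?g p \<partial>(unif01 \<Otimes>\<^sub>M unif01_prod n))"
    using int by (rule integral_fst')
  also have "\<dots> = gap_moment n a b - real a / (real a + 1) * gap_moment n (Suc a) b
    - real b / (real b + 1) * gap_moment n a (Suc b)"
    unfolding gap_moment_def using integrable_gap_monomial by simp
  finally show ?thesis .
qed

lemma gap_moment_0: "gap_moment 0 a b = fact a * fact b / fact (a + b + 1)"
proof -
  interpret pair_prob_space unif01 "unif01_prod 0"
    by (rule pair_prob_space_unif01_prod)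
  have "gap_moment 0 a b = (\<integral>x. \<integral>t. gap_monomial 0 a b (x, t) \<partial>unif01_prod 0 \<partial>unif01)"
    unfolding gap_moment_def by (rule integral_fst'[symmetric]) (rule integrable_gap_monomial)
  also have "\<dots> = (\<integral>x. x ^ a * (1 - x) ^ b \<partial>unif01)"
    using prob_space.prob_space[OF prob_space_unif01_prod[of 0]] by (simp add: gap_monomial_def)
  also have "\<dots> = fact a * fact b / fact (a + b + 1)"
    by (rule integral_unif01_eq_has_integral[OF has_integral_beta_nat, where B = 1])
       (auto simp: abs_mult power_le_one mult_le_one)
  finally show ?thesis .
qed

lemma gap_moment_eq: "gap_moment n a b = fact a * fact b * fact (n + 1) / fact (a + b + n + 1)"
proof (induction n arbitrary: a b)
  case 0
  then show ?case by (simp add: gap_moment_0)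
next
  case (Suc n)
  define F :: real where "F = fact (a + b + n + 1)"
  define S :: real where "S = real a + real b + real n + 2"
  define X :: real where "X = fact a * fact b * fact (n + 1) / F"
  have F: "fact (Suc a + b + n + 1) = S * F" "fact (a + Suc b + n + 1) = S * F"
    "fact (a + b + Suc n + 1) = S * F"
    by (simp_all add: F_def S_def algebra_simps)
  have "S > 0"
    by (simp add: S_def)
  have "gap_moment n (Suc a) b = (real a + 1) / S * X"
    unfolding Suc.IH F by (simp add: X_def)
  moreover have "gap_moment n a (Suc b) = (real b + 1) / S * X"
    unfolding Suc.IH F by (simp add: X_def)
  moreover have "fact a * fact b * fact (Suc n + 1) / fact (a + b + Suc n + 1) =
      (real n + 2) / S * X"
    unfolding F by (simp add: X_def)
  moreover have "real k / (real k + 1) * ((real k + 1) / S * X) = real k / S * X" for k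
    by simp
  moreover have "X - real a / S * X - real b / S * X = (S - real a - real b) / S * X"
    using \<open>S > 0\<close> by (simp add: field_simps)
  moreover have "S - real a - real b = real n + 2"
    by (simp add: S_def)
  ultimately show ?case
    unfolding gap_moment_Suc Suc.IH F_def[symmetric] X_def[symmetric] by simp
qed

lemma gap_moments_order_2:
  "gap_moment n 2 0 = 2 / ((real n + 2) * (real n + 3))"
  "gap_moment n 1 1 = 1 / ((real n + 2) * (real n + 3))"
  "gap_moment n 0 2 = 2 / ((real n + 2) * (real n + 3))"
proof -
  have "fact (n + 3) = (real n + 2) * (real n + 3) * (fact (n + 1) :: real)"
    by (simp add: numeral_3_eq_3 algebra_simps)
  then show "gap_moment n 2 0 = 2 / ((real n + 2) * (real n + 3))"
    "gap_moment n 1 1 = 1 / ((real n + 2) * (real n + 3))"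
    "gap_moment n 0 2 = 2 / ((real n + 2) * (real n + 3))"
    by (simp_all add: gap_moment_eq numeral_2_eq_2 add_ac)
qed

text \<open>Only almost everywhere: outside \<open>[0, 1)\<close> the encoder is a junk value of \<open>THE\<close>.\<close>

lemma AE_quantization_error_eq_gap_monomials:
  assumes "K \<ge> 1"
  shows "AE p in unif01 \<Otimes>\<^sub>M unif01_prod (K - 1).
    (fst p - decoder K (snd p) (encoder K (snd p) (fst p)))\<^sup>2 =
    (gap_monomial (K - 1) 2 0 p - 2 * gap_monomial (K - 1) 1 1 p + gap_monomial (K - 1) 0 2 p) / 4"
  using AE_unif01_pair_fst[of "K - 1"] AE_unif01_pair_thresholds[of "K - 1"]
proof eventually_elim
  case (elim p)
  then have decoder: "decoder K (snd p) (encoder K (snd p) (fst p)) =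
      (nearest_below (K - 1) (fst p) (snd p) + nearest_above (K - 1) (fst p) (snd p)) / 2"
    using assms by (intro decoder_encoder) (auto dest!: bspec[of _ _ "_ :: nat"])
  show ?case
    unfolding decoder gap_monomial_def by (simp add: power2_eq_square field_simps)
qed

theorem theorem1:
  fixes K :: nat
  assumes "K \<ge> 1"
  shows "(\<integral>p. (fst p - decoder K (snd p) (encoder K (snd p) (fst p)))\<^sup>2
            \<partial>(unif01 \<Otimes>\<^sub>M (\<Pi>\<^sub>M i\<in>{..<K-1}. unif01)))
         = 1 / (2 * (real K + 1) * (real K + 2))"
proof -
  let ?n = "K - 1"
  have "(\<integral>p. (fst p - decoder K (snd p) (encoder K (snd p) (fst p)))\<^sup>2
      \<partial>(unif01 \<Otimes>\<^sub>M unif01_prod ?n)) =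
      (\<integral>p. (gap_monomial ?n 2 0 p - 2 * gap_monomial ?n 1 1 p + gap_monomial ?n 0 2 p) / 4
        \<partial>(unif01 \<Otimes>\<^sub>M unif01_prod ?n))"
    using AE_quantization_error_eq_gap_monomials[OF assms]
    by (intro integral_cong_AE measurable_quantization_error) simp_all
  also have "\<dots> = (gap_moment ?n 2 0 - 2 * gap_moment ?n 1 1 + gap_moment ?n 0 2) / 4"
    unfolding gap_moment_def using integrable_gap_monomial by simp
  also have "\<dots> = 1 / (2 * ((real ?n + 2) * (real ?n + 3)))"
    unfolding gap_moments_order_2 by simp
  also have "\<dots> = 1 / (2 * (real K + 1) * (real K + 2))"
    using assms by (simp add: of_nat_diff algebra_simps)
  finally show ?thesis .
qed

end
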